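(* Under the bounded overflow sharing model, if $k_i\in\{1,2,\dots,N_i\}$ for $i=1,2$, then for each $i\in\{1,2\}$, $$E(N_i+k_{-i},a_i)<B_i^{(bo)}(k_1,k_2)<E(N_i-k_i,a_i).$$
   Context: Two service providers $P_1,P_2$. Provider $P_i$ has $N_i$ servers (a positive integer); its calls arrive as a Poisson process of rate $\lambda_i>0$ with i.i.d. holding times of mean $1/\mu_i<\infty$, all independent; $a_i=\lambda_i/\mu_i$. $E(N,a)=\frac{a^N/N!}{\sum_{j=0}^N a^j/j!}$ is the Erlang-B formula (with $E(0,a)=1$). $-i$ denotes the index other than $i$. $n_i$ is the number of active calls of $P_i$; calls are not attached to specific servers (call repacking). Bounded overflow model with integer parameter $(k_1,k_2)$: an arriving call of $P_{-i}$ is admitted if $n_{-i}<N_{-i}+k_i$ and $n_1+n_2<N_1+N_2$, and blocked otherwise. $B_i^{(bo)}(k_1,k_2)$ is the steady-state probability that an arriving call of $P_i$ is blocked. *)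

theory Defs
  imports Complex_Main
begin

definition erlangB :: "nat \<Rightarrow> real \<Rightarrow> real" where
  "erlangB N a = (a ^ N / fact N) / (\<Sum>j\<le>N. a ^ j / fact j)"

text \<open>Providers are indexed 1 and 2; the other index of i is 3 - i.\<close>
definition other :: "nat \<Rightarrow> nat" where
  "other i = 3 - i"

definition comp :: "nat \<Rightarrow> nat \<times> nat \<Rightarrow> nat" where
  "comp j s = (if j = 1 then fst s else snd s)"

definition bo_admits :: "(nat \<Rightarrow> nat) \<Rightarrow> (nat \<Rightarrow> nat) \<Rightarrow> nat \<Rightarrow> nat \<times> nat \<Rightarrow> bool" where
  "bo_admits N k j s \<longleftrightarrow> comp j s < N j + k (other j) \<and> fst s + snd s < N 1 + N 2"

text \<open>State space of the bounded overflow model (states reachable from (0,0)).\<close>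
definition bo_states :: "(nat \<Rightarrow> nat) \<Rightarrow> (nat \<Rightarrow> nat) \<Rightarrow> (nat \<times> nat) set" where
  "bo_states N k = {(n1, n2). n1 \<le> N 1 + k 2 \<and> n2 \<le> N 2 + k 1 \<and> n1 + n2 \<le> N 1 + N 2}"

text \<open>Unnormalised stationary weight (product form, truncated to the coordinate-convex
  state space; insensitive to the holding-time distribution).\<close>
definition bo_weight :: "(nat \<Rightarrow> real) \<Rightarrow> nat \<times> nat \<Rightarrow> real" where
  "bo_weight a s = (a 1 ^ fst s / fact (fst s)) * (a 2 ^ snd s / fact (snd s))"

text \<open>Steady-state blocking probability of provider i (by PASTA: stationary mass of
  states in which an arriving call of i is not admitted).\<close>
definition bo_block :: "(nat \<Rightarrow> nat) \<Rightarrow> (nat \<Rightarrow> nat) \<Rightarrow> (nat \<Rightarrow> real) \<Rightarrow> nat \<Rightarrow> real" where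
  "bo_block N k a i =
     (\<Sum>s\<in>{s \<in> bo_states N k. \<not> bo_admits N k i s}. bo_weight a s)
     / (\<Sum>s\<in>bo_states N k. bo_weight a s)"

end

theory Submission
  imports Defs
begin

text \<open>Conditioning on the number n2 of calls of provider 2, the state space of the bounded
  overflow model splits into Erlang loss systems for provider 1 with capacities
  min (N1 + k2) (N1 + N2 - n2), and the blocking probability of provider 1 is a weighted
  mean of the Erlang-B values of these capacities with positive weights. The capacities
  range over [N1 - k1, N1 + k2] and attain both endpoints (at n2 = 0 and at
  n2 = N2 + k1), so strict monotonicity of E(N, a) in N yields both strict bounds.
  Provider 2 is reduced to provider 1 by swapping the roles of the providers.\<close>

definition erlang_sum :: "nat \<Rightarrow> real \<Rightarrow> real" where
  "erlang_sum m a = (\<Sum>j\<le>m. a ^ j / fact j)"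

lemma erlang_sum_pos: "a > 0 \<Longrightarrow> erlang_sum m a > 0"
  unfolding erlang_sum_def by (rule sum_pos) auto

lemma erlangB_eq: "erlangB m a = (a ^ m / fact m) / erlang_sum m a"
  unfolding erlangB_def erlang_sum_def ..

lemma erlang_sum_mult_erlangB: "a > 0 \<Longrightarrow> erlang_sum m a * erlangB m a = a ^ m / fact m"
  using erlang_sum_pos[of a m] by (simp add: erlangB_eq)

lemma erlang_sum_Suc_gt:
  assumes "a > 0"
  shows "a / real (Suc m) * erlang_sum m a < erlang_sum (Suc m) a"
proof -
  have "a / real (Suc m) * erlang_sum m a = (\<Sum>j\<le>m. a ^ Suc j / (real (Suc m) * fact j))"
    unfolding erlang_sum_def sum_distrib_left by (rule sum.cong) (auto simp: field_simps)
  also have "\<dots> \<le> (\<Sum>j\<le>m. a ^ Suc j / fact (Suc j))"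
  proof (rule sum_mono)
    fix j assume "j \<in> {..m}"
    then have "real (Suc j) * fact j \<le> real (Suc m) * fact j" by simp
    moreover have "0 < real (Suc j) * fact j" by simp
    ultimately show "a ^ Suc j / (real (Suc m) * fact j) \<le> a ^ Suc j / fact (Suc j)"
      using assms by (simp add: frac_le del: of_nat_Suc)
  qed
  also have "\<dots> < 1 + (\<Sum>j\<le>m. a ^ Suc j / fact (Suc j))" by simp
  also have "\<dots> = erlang_sum (Suc m) a"
    unfolding erlang_sum_def sum.atMost_Suc_shift[of _ m] by simp
  finally show ?thesis .
qed

lemma erlangB_Suc_less:
  assumes "a > 0"
  shows "erlangB (Suc m) a < erlangB m a"
proof -
  have "a ^ Suc m / fact (Suc m) * erlang_sum m a = a ^ m / fact m * (a / real (Suc m) * erlang_sum m a)"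
    by (simp add: field_simps)
  also have "\<dots> < a ^ m / fact m * erlang_sum (Suc m) a"
    using erlang_sum_Suc_gt[OF assms] assms by (intro mult_strict_left_mono) auto
  finally show ?thesis
    using erlang_sum_pos[OF assms, of m] erlang_sum_pos[OF assms, of "Suc m"]
    by (simp add: erlangB_eq divide_simps mult_ac)
qed

lemma erlangB_strict_antimono:
  assumes "a > 0" "m < m'"
  shows "erlangB m' a < erlangB m a"
  using lift_Suc_mono_less[of "\<lambda>m. - erlangB m a", OF _ assms(2)] erlangB_Suc_less[OF assms(1)]
  by simp

lemma erlangB_antimono:
  assumes "a > 0" "m \<le> m'"
  shows "erlangB m' a \<le> erlangB m a"
  using erlangB_strict_antimono[OF assms(1)] assms(2) by (cases "m = m'") (auto simp: less_imp_le)

lemma weighted_mean_strictly_between: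
  fixes w f :: "'a \<Rightarrow> real"
  assumes "finite S" and w_pos: "\<And>x. x \<in> S \<Longrightarrow> 0 < w x"
    and f_bounds: "\<And>x. x \<in> S \<Longrightarrow> lo \<le> f x \<and> f x \<le> hi"
    and "x \<in> S" "lo < f x" and "y \<in> S" "f y < hi"
  shows "lo < (\<Sum>x\<in>S. w x * f x) / sum w S \<and> (\<Sum>x\<in>S. w x * f x) / sum w S < hi"
proof -
  have "sum w S > 0"
    using assms(1,4) w_pos by (intro sum_pos) auto
  moreover have "lo * sum w S < (\<Sum>x\<in>S. w x * f x)"
    unfolding sum_distrib_left
  proof (rule sum_strict_mono_ex1)
    show "\<forall>x\<in>S. lo * w x \<le> w x * f x"
      using w_pos f_bounds by (simp add: mult.commute less_imp_le)
    show "\<exists>x\<in>S. lo * w x < w x * f x"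
      using \<open>x \<in> S\<close> \<open>lo < f x\<close> w_pos[of x] by (intro bexI[of _ x]) (auto simp: mult.commute)
  qed fact
  moreover have "(\<Sum>x\<in>S. w x * f x) < hi * sum w S"
    unfolding sum_distrib_left
  proof (rule sum_strict_mono_ex1)
    show "\<forall>x\<in>S. w x * f x \<le> hi * w x"
      using w_pos f_bounds by (simp add: mult.commute less_imp_le)
    show "\<exists>x\<in>S. w x * f x < hi * w x"
      using \<open>y \<in> S\<close> \<open>f y < hi\<close> w_pos[of y] by (intro bexI[of _ y]) (auto simp: mult.commute)
  qed fact
  ultimately show ?thesis
    by (simp add: divide_simps mult.commute)
qed

definition bo_capacity_1 :: "(nat \<Rightarrow> nat) \<Rightarrow> (nat \<Rightarrow> nat) \<Rightarrow> nat \<Rightarrow> nat" where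
  "bo_capacity_1 N k n2 = min (N 1 + k 2) (N 1 + N 2 - n2)"

lemma bo_states_eq_Sigma:
  assumes "k 1 \<le> N 1"
  shows "bo_states N k = prod.swap ` (SIGMA n2:{..N 2 + k 1}. {..bo_capacity_1 N k n2})"
  using assms by (force simp: bo_states_def bo_capacity_1_def image_iff)

lemma bo_blocked_1_eq:
  assumes "k 1 \<le> N 1"
  shows "{s \<in> bo_states N k. \<not> bo_admits N k 1 s}
    = (\<lambda>n2. (bo_capacity_1 N k n2, n2)) ` {..N 2 + k 1}"
  using assms
  by (auto simp: bo_states_def bo_admits_def bo_capacity_1_def comp_def other_def image_iff)

lemma bo_block_1_eq_weighted_mean:
  assumes "k 1 \<le> N 1" "a 1 > 0"
  defines "w \<equiv> \<lambda>n2. a 2 ^ n2 / fact n2 * erlang_sum (bo_capacity_1 N k n2) (a 1)"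
  shows "bo_block N k a 1
    = (\<Sum>n2\<le>N 2 + k 1. w n2 * erlangB (bo_capacity_1 N k n2) (a 1)) / (\<Sum>n2\<le>N 2 + k 1. w n2)"
proof -
  have "(\<Sum>s\<in>bo_states N k. bo_weight a s)
      = (\<Sum>n2\<le>N 2 + k 1. \<Sum>n1\<le>bo_capacity_1 N k n2. bo_weight a (n1, n2))"
    unfolding bo_states_eq_Sigma[of k N, OF assms(1)] sum.reindex[OF inj_swap]
    by (subst sum.Sigma) (auto simp: case_prod_unfold prod.swap_def)
  also have "\<dots> = (\<Sum>n2\<le>N 2 + k 1. w n2)"
    by (simp add: w_def erlang_sum_def bo_weight_def sum_distrib_left mult.commute)
  finally have total: "(\<Sum>s\<in>bo_states N k. bo_weight a s) = (\<Sum>n2\<le>N 2 + k 1. w n2)" .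
  have "(\<Sum>s\<in>{s \<in> bo_states N k. \<not> bo_admits N k 1 s}. bo_weight a s)
      = (\<Sum>n2\<le>N 2 + k 1. w n2 * erlangB (bo_capacity_1 N k n2) (a 1))"
    unfolding bo_blocked_1_eq[of k N, OF assms(1)] w_def mult.assoc erlang_sum_mult_erlangB[OF assms(2)]
    by (subst sum.reindex) (auto simp: inj_on_def bo_weight_def mult.commute)
  with total show ?thesis
    unfolding bo_block_def by simp
qed

lemma bo_capacity_1_bounds:
  assumes "k 1 \<le> N 1" "n2 \<le> N 2 + k 1"
  shows "N 1 - k 1 \<le> bo_capacity_1 N k n2 \<and> bo_capacity_1 N k n2 \<le> N 1 + k 2"
  using assms unfolding bo_capacity_1_def by auto

lemma bo_capacity_1_empty: "k 2 \<le> N 2 \<Longrightarrow> bo_capacity_1 N k 0 = N 1 + k 2"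
  unfolding bo_capacity_1_def by auto

lemma bo_capacity_1_full: "k 1 \<le> N 1 \<Longrightarrow> bo_capacity_1 N k (N 2 + k 1) = N 1 - k 1"
  unfolding bo_capacity_1_def by auto

lemma bo_block_1_strict_bounds:
  fixes a :: "nat \<Rightarrow> real"
  assumes "a 1 > 0" "a 2 > 0" and "0 < k 1" "k 1 \<le> N 1" "k 2 \<le> N 2"
  shows "erlangB (N 1 + k 2) (a 1) < bo_block N k a 1
       \<and> bo_block N k a 1 < erlangB (N 1 - k 1) (a 1)"
  unfolding bo_block_1_eq_weighted_mean[of k N a, OF assms(4,1)]
proof (rule weighted_mean_strictly_between)
  let ?E = "\<lambda>n2. erlangB (bo_capacity_1 N k n2) (a 1)"
  have capacity_gap: "N 1 - k 1 < N 1 + k 2"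
    using assms(3,4) by auto
  show "a 2 ^ n2 / fact n2 * erlang_sum (bo_capacity_1 N k n2) (a 1) > 0" for n2
    using assms(1,2) erlang_sum_pos by simp
  show "erlangB (N 1 + k 2) (a 1) \<le> ?E n2 \<and> ?E n2 \<le> erlangB (N 1 - k 1) (a 1)"
    if "n2 \<in> {..N 2 + k 1}" for n2
    using that bo_capacity_1_bounds[of k N, OF assms(4)] erlangB_antimono[OF assms(1)] by simp
  show "erlangB (N 1 + k 2) (a 1) < ?E (N 2 + k 1)"
    using bo_capacity_1_full[of k N, OF assms(4)] erlangB_strict_antimono[OF assms(1) capacity_gap]
    by simp
  show "?E 0 < erlangB (N 1 - k 1) (a 1)"
    using bo_capacity_1_empty[of k N, OF assms(5)] erlangB_strict_antimono[OF assms(1) capacity_gap]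
    by simp
qed auto

lemma bo_block_2_eq_swap:
  "bo_block N k a 2 = bo_block (N \<circ> other) (k \<circ> other) (a \<circ> other) 1"
proof -
  have states: "bo_states (N \<circ> other) (k \<circ> other) = prod.swap ` bo_states N k"
    by (auto simp: bo_states_def other_def image_iff)
  have blocked: "{s \<in> bo_states (N \<circ> other) (k \<circ> other). \<not> bo_admits (N \<circ> other) (k \<circ> other) 1 s}
      = prod.swap ` {s \<in> bo_states N k. \<not> bo_admits N k 2 s}"
    by (auto simp: bo_states_def bo_admits_def comp_def other_def image_iff)
  have weight: "bo_weight (a \<circ> other) \<circ> prod.swap = bo_weight a"
    by (rule ext) (simp add: bo_weight_def other_def mult.commute)
  show ?thesis
    unfolding bo_block_def blocked unfolding states sum.reindex[OF inj_swap] weight ..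
qed

theorem lemma11:
  fixes N :: "nat \<Rightarrow> nat" and k :: "nat \<Rightarrow> nat" and lam mu :: "nat \<Rightarrow> real" and i :: nat
  assumes "\<forall>j\<in>{1,2}. N j > 0 \<and> lam j > 0 \<and> mu j > 0"
    and "\<forall>j\<in>{1,2}. k j \<in> {1..N j}"
    and "i \<in> {1,2}"
  shows "erlangB (N i + k (other i)) (lam i / mu i) < bo_block N k (\<lambda>j. lam j / mu j) i
       \<and> bo_block N k (\<lambda>j. lam j / mu j) i < erlangB (N i - k i) (lam i / mu i)"
proof -
  let ?a = "\<lambda>j. lam j / mu j"
  have loads: "?a 1 > 0" "?a 2 > 0"
    using assms(1) by auto
  have shares: "0 < k 1" "k 1 \<le> N 1" "0 < k 2" "k 2 \<le> N 2"
    using assms(2) by auto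
  have other: "other 1 = 2" "other 2 = 1"
    by (simp_all add: other_def)
  have provider_1: ?thesis if "i = 1"
    using that bo_block_1_strict_bounds[of ?a, OF loads shares(1,2,4)] other by simp
  have provider_2: ?thesis if "i = 2"
    using that bo_block_1_strict_bounds[of "?a \<circ> other" "k \<circ> other" "N \<circ> other"]
      loads shares other
    by (simp add: bo_block_2_eq_swap)
  show ?thesis
    using assms(3) provider_1 provider_2 by blast
qed

end
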